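(* Let $\mathbb{R}^n$ and $\mathbb{R}^m$ be endowed with arbitrary norms (both denoted $\|\cdot\|$). Suppose $A\in\mathbb{R}^{m\times n}$ has at least two different columns and $f:\mathbb{R}^m\to\mathbb{R}\cup\{\infty\}$ is a differentiable convex function that is $L_f$-smooth and $\mu_f$-strongly convex on $\mathrm{conv}(A)$. Then \[ L_{f,A}\le L_f\cdot\max_{w\in\mathbb{R}^n\setminus\{0\},\ \langle\mathbf{1},w\rangle=0}\frac{\|Aw\|^2}{\|w\|^2},\qquad \mu_{f,A}\ge\frac{\mu_f\cdot\Phi(A)^2}{4\max_{i=1,\dots,n}\|e_i\|^2}, \] and in particular \[ \frac{L_{f,A}}{\mu_{f,A}}\le\frac{L_f}{\mu_f}\cdot\frac{4\max_{i}\|e_i\|^2}{\Phi(A)^2}\cdot\max_{w\in\mathbb{R}^n\setminus\{0\},\ \langle\mathbf{1},w\rangle=0}\frac{\|Aw\|^2}{\|w\|^2}. \]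
   Context: $\mathbf{1}$ is the all-ones vector and $e_i$ the standard basis vectors of $\mathbb{R}^n$. A differentiable convex $f$ is $L_f$-smooth ($L_f>0$) on $S\subseteq\mathrm{dom}(f)$ if $f(v)\le f(u)+\langle\nabla f(u),v-u\rangle+\frac{L_f}{2}\|v-u\|^2$ for all $u,v\in S$, and $\mu_f$-strongly convex ($\mu_f\ge0$) on $S$ if $f(v)\ge f(u)+\langle\nabla f(u),v-u\rangle+\frac{\mu_f}{2}\|v-u\|^2$ for all $u,v\in S$ (norm of $\mathbb{R}^m$). $\Delta_{n-1}=\{x\in\mathbb{R}^n_+:\sum_ix_i=1\}$; $A$ is identified with the set of its columns; $\mathrm{conv}(A)=\{Ax:x\in\Delta_{n-1}\}$; for $u\in\mathrm{conv}(A)$, $Z(u)=\{z\in\Delta_{n-1}:Az=u\}$ and $\mathrm{dist}(x,Z(u))=\min_{z\in Z(u)}\|x-z\|$ (norm of $\mathbb{R}^n$). The relative constants are \[ L_{f,A}=\sup_{u\in\mathrm{conv}(A),\,x\in\Delta_{n-1}\setminus Z(u)}\frac{2(f(Ax)-f(u)-\langle\nabla f(u),Ax-u\rangle)}{\mathrm{dist}(x,Z(u))^2}, \] and $\mu_{f,A}$ the same with $\inf$ instead of $\sup$. The facial distance is $\Phi(A)=\min\{\mathrm{dist}(F,\mathrm{conv}(A\setminus F)):F\text{ a face of }\mathrm{conv}(A),\ \emptyset\ne F\ne\mathrm{conv}(A)\}$, with $A\setminus F$ the columns of $A$ not in $F$ and $\mathrm{dist}(F,G)=\inf_{u\in F,w\in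 G}\|u-w\|$ (norm of $\mathbb{R}^m$). *)

theory Defs
  imports "HOL-Analysis.Analysis"
begin

definition is_norm :: "('a::real_vector \<Rightarrow> real) \<Rightarrow> bool" where
  "is_norm N \<longleftrightarrow> (\<forall>x. N x = 0 \<longleftrightarrow> x = 0) \<and> (\<forall>x y. N (x + y) \<le> N x + N y)
     \<and> (\<forall>c x. N (c *\<^sub>R x) = \<bar>c\<bar> * N x)"

definition unit_simplex :: "(real^'n) set" where
  "unit_simplex = {x. (\<forall>i. 0 \<le> x $ i) \<and> (\<Sum>i\<in>UNIV. x $ i) = 1}"

definition convA :: "real^'n^'m \<Rightarrow> (real^'m) set" where
  "convA A = {A *v x | x. x \<in> unit_simplex}"

definition Zset :: "real^'n^'m \<Rightarrow> real^'m \<Rightarrow> (real^'n) set" where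
  "Zset A u = {z \<in> unit_simplex. A *v z = u}"

definition distZ :: "(real^'n \<Rightarrow> real) \<Rightarrow> real^'n^'m \<Rightarrow> real^'n \<Rightarrow> real^'m \<Rightarrow> real" where
  "distZ Nn A x u = Inf {Nn (x - z) | z. z \<in> Zset A u}"

text \<open>L-smoothness and mu-strong convexity on S w.r.t. the norm Nm; f' u is the
  derivative of f at u, so f' u h = <grad f(u), h>.\<close>
definition Lsmooth_on :: "(real^'m \<Rightarrow> real) \<Rightarrow> real \<Rightarrow> (real^'m \<Rightarrow> real) \<Rightarrow> (real^'m \<Rightarrow> real^'m \<Rightarrow> real) \<Rightarrow> (real^'m) set \<Rightarrow> bool" where
  "Lsmooth_on Nm L f f' S \<longleftrightarrow>
     (\<forall>u\<in>S. \<forall>v\<in>S. f v \<le> f u + f' u (v - u) + L / 2 * (Nm (v - u))\<^sup>2)"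

definition strongly_convex_wrt :: "(real^'m \<Rightarrow> real) \<Rightarrow> real \<Rightarrow> (real^'m \<Rightarrow> real) \<Rightarrow> (real^'m \<Rightarrow> real^'m \<Rightarrow> real) \<Rightarrow> (real^'m) set \<Rightarrow> bool" where
  "strongly_convex_wrt Nm \<mu> f f' S \<longleftrightarrow>
     (\<forall>u\<in>S. \<forall>v\<in>S. f v \<ge> f u + f' u (v - u) + \<mu> / 2 * (Nm (v - u))\<^sup>2)"

definition rel_quot_set :: "(real^'n \<Rightarrow> real) \<Rightarrow> (real^'m \<Rightarrow> real) \<Rightarrow> (real^'m \<Rightarrow> real^'m \<Rightarrow> real) \<Rightarrow> real^'n^'m \<Rightarrow> real set" where
  "rel_quot_set Nn f f' A =
     {2 * (f (A *v x) - f u - f' u (A *v x - u)) / (distZ Nn A x u)\<^sup>2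
       | u x. u \<in> convA A \<and> x \<in> unit_simplex - Zset A u}"

definition L_rel :: "(real^'n \<Rightarrow> real) \<Rightarrow> (real^'m \<Rightarrow> real) \<Rightarrow> (real^'m \<Rightarrow> real^'m \<Rightarrow> real) \<Rightarrow> real^'n^'m \<Rightarrow> ereal" where
  "L_rel Nn f f' A = (SUP q\<in>rel_quot_set Nn f f' A. ereal q)"

definition mu_rel :: "(real^'n \<Rightarrow> real) \<Rightarrow> (real^'m \<Rightarrow> real) \<Rightarrow> (real^'m \<Rightarrow> real^'m \<Rightarrow> real) \<Rightarrow> real^'n^'m \<Rightarrow> ereal" where
  "mu_rel Nn f f' A = (INF q\<in>rel_quot_set Nn f f' A. ereal q)"

definition cols :: "real^'n^'m \<Rightarrow> (real^'m) set" where
  "cols A = {column j A | j. True}"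

definition norm_set_dist :: "(real^'m \<Rightarrow> real) \<Rightarrow> (real^'m) set \<Rightarrow> (real^'m) set \<Rightarrow> real" where
  "norm_set_dist Nm F G = Inf {Nm (u - w) | u w. u \<in> F \<and> w \<in> G}"

definition facial_distance :: "(real^'m \<Rightarrow> real) \<Rightarrow> real^'n^'m \<Rightarrow> real" where
  "facial_distance Nm A = Inf {norm_set_dist Nm F (convex hull {a \<in> cols A. a \<notin> F}) | F.
      F face_of convA A \<and> F \<noteq> {} \<and> F \<noteq> convA A}"

definition restricted_gain :: "(real^'n \<Rightarrow> real) \<Rightarrow> (real^'m \<Rightarrow> real) \<Rightarrow> real^'n^'m \<Rightarrow> real" where
  "restricted_gain Nn Nm A = Sup {(Nm (A *v w))\<^sup>2 / (Nn w)\<^sup>2 | w. w \<noteq> 0 \<and> (\<Sum>i\<in>UNIV. w $ i) = 0}"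

definition max_basis_norm_sq :: "(real^'n \<Rightarrow> real) \<Rightarrow> real" where
  "max_basis_norm_sq Nn = Max (range (\<lambda>i. (Nn (axis i 1))\<^sup>2))"

end

(*
  Upper bound: if z is a point of Z(u) nearest to x, then Ax - u = A(x - z) and the entries
  of x - z sum to zero, so L-smoothness bounds the numerator of the quotient by
  L_f * gain * dist(x, Z(u))^2.

  Lower bound: split x = r + p with 0 <= r <= x, where r is kept in place and the remaining
  mass t = 1 - sum r is carried by a point b = Ay of conv(A), choosing the split with sum r
  maximal.  Then z = r + t y lies in Z(u), the 1-norm of x - z is at most 2t, and
  Ax - u = t (a - b) with a the normalized image of p.  Taking the face G of conv(A) whose
  relative interior contains b, maximality forces every column carrying weight in p to lie
  outside G, so a lies in the convex hull of the columns off G and |Ax - u| >= t Phi(A).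
*)
theory Submission
  imports Defs
begin

section \<open>Norms given as functions\<close>

lemma is_norm_zero: "is_norm N \<Longrightarrow> N 0 = 0"
  by (simp add: is_norm_def)

lemma is_norm_scaleR: "is_norm N \<Longrightarrow> N (c *\<^sub>R x) = \<bar>c\<bar> * N x"
  by (simp add: is_norm_def)

lemma is_norm_triangle: "is_norm N \<Longrightarrow> N (x + y) \<le> N x + N y"
  by (simp add: is_norm_def)

lemma is_norm_minus: "is_norm N \<Longrightarrow> N (- x) = N x"
  using is_norm_scaleR[of N "-1" x] by simp

lemma is_norm_commute: "is_norm N \<Longrightarrow> N (x - y) = N (y - x)"
  by (metis is_norm_minus minus_diff_eq)

lemma is_norm_nonneg: "is_norm N \<Longrightarrow> 0 \<le> N x"
  using is_norm_triangle[of N x "- x"] is_norm_zero[of N] is_norm_minus[of N x] by simp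

lemma is_norm_pos: "is_norm N \<Longrightarrow> x \<noteq> 0 \<Longrightarrow> 0 < N x"
  by (metis is_norm_def is_norm_nonneg order_le_less)

lemma is_norm_sum_le: "is_norm N \<Longrightarrow> N (sum f S) \<le> (\<Sum>i\<in>S. N (f i))"
proof (induction S rule: infinite_finite_induct)
  case (insert x F)
  then show ?case using is_norm_triangle[OF insert(4), of "f x" "sum f F"] by simp
qed (simp_all add: is_norm_zero)

lemma is_norm_le_norm:
  fixes N :: "'a::euclidean_space \<Rightarrow> real"
  assumes N: "is_norm N"
  obtains C where "0 \<le> C" "\<And>x. N x \<le> C * norm x"
proof
  show "0 \<le> (\<Sum>b\<in>Basis. N b)" by (simp add: is_norm_nonneg[OF N] sum_nonneg)
  fix x :: 'a
  have "N x = N (\<Sum>b\<in>Basis. (x \<bullet> b) *\<^sub>R b)" by (simp add: euclidean_representation)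
  also have "\<dots> \<le> (\<Sum>b\<in>Basis. N ((x \<bullet> b) *\<^sub>R b))" by (rule is_norm_sum_le[OF N])
  also have "\<dots> = (\<Sum>b\<in>Basis. \<bar>x \<bullet> b\<bar> * N b)" by (simp add: is_norm_scaleR[OF N])
  also have "\<dots> \<le> (\<Sum>b\<in>Basis. norm x * N b)"
    by (intro sum_mono mult_right_mono Basis_le_norm is_norm_nonneg[OF N]) auto
  finally show "N x \<le> (\<Sum>b\<in>Basis. N b) * norm x" by (simp add: sum_distrib_left mult.commute)
qed

lemma is_norm_continuous_on:
  fixes N :: "'a::euclidean_space \<Rightarrow> real"
  assumes N: "is_norm N"
  shows "continuous_on S N"
proof -
  obtain C where C: "0 \<le> C" "\<And>x. N x \<le> C * norm x" using is_norm_le_norm[OF N] by blast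
  have "\<bar>N x - N y\<bar> \<le> C * norm (x - y)" for x y
    using is_norm_triangle[OF N, of "x - y" y] is_norm_triangle[OF N, of "y - x" x]
      C(2)[of "x - y"] C(2)[of "y - x"]
    by (simp add: abs_le_iff norm_minus_commute)
  then have "C-lipschitz_on S N" by (intro lipschitz_onI) (auto simp: dist_norm C)
  then show ?thesis by (rule lipschitz_on_continuous_on)
qed

lemma is_norm_ge_norm:
  fixes N :: "'a::euclidean_space \<Rightarrow> real"
  assumes N: "is_norm N"
  obtains c where "0 < c" "\<And>x. c * norm x \<le> N x"
proof -
  have "sphere (0::'a) 1 \<noteq> {}" by (simp add: sphere_eq_empty)
  then obtain y where y: "y \<in> sphere 0 1" "\<And>z. z \<in> sphere 0 1 \<Longrightarrow> N y \<le> N z"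
    using continuous_attains_inf[OF compact_sphere _ is_norm_continuous_on[OF N]] by blast
  show ?thesis
  proof
    show "0 < N y" using y(1) by (intro is_norm_pos[OF N]) auto
    fix x :: 'a
    show "N y * norm x \<le> N x"
    proof (cases "x = 0")
      case False
      have "N y \<le> N (x /\<^sub>R norm x)" using False by (intro y(2)) auto
      then show ?thesis using False by (simp add: is_norm_scaleR[OF N] field_simps)
    qed (simp add: is_norm_zero[OF N])
  qed
qed

lemma is_norm_attains_min_dist:
  fixes N :: "'a::euclidean_space \<Rightarrow> real"
  assumes "is_norm N" "compact S" "S \<noteq> {}"
  obtains z where "z \<in> S" "\<And>z'. z' \<in> S \<Longrightarrow> N (x - z) \<le> N (x - z')"
proof -
  have "continuous_on S (\<lambda>z. N (x - z))"
    by (rule continuous_on_compose2[OF is_norm_continuous_on[OF assms(1), of UNIV]])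
      (auto intro!: continuous_intros)
  then show ?thesis using continuous_attains_inf[OF assms(2,3)] that by blast
qed

section \<open>The simplex and the polytope conv(A)\<close>

lemma axis_in_unit_simplex: "axis j (1::real) \<in> unit_simplex"
  by (simp add: unit_simplex_def axis_def)

lemma convex_unit_simplex: "convex unit_simplex"
  unfolding convex_def unit_simplex_def
  by (auto simp: sum.distrib sum_distrib_left[symmetric])

lemma unit_simplex_le_1: "x \<in> unit_simplex \<Longrightarrow> x $ i \<le> 1"
  unfolding unit_simplex_def using member_le_sum[of i UNIV "\<lambda>i. x $ i"] by auto

lemma compact_unit_simplex: "compact unit_simplex"
proof -
  have "unit_simplex \<subseteq> cbox (0::real^'n) 1"
    using unit_simplex_le_1 by (auto simp: mem_box_cart) (auto simp: unit_simplex_def)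
  then have "bounded (unit_simplex :: (real^'n) set)" using bounded_cbox bounded_subset by blast
  moreover have "closed (unit_simplex :: (real^'n) set)"
    unfolding unit_simplex_def
    by (intro closed_Collect_conj closed_Collect_all closed_Collect_le closed_Collect_eq continuous_intros)
  ultimately show ?thesis by (simp add: compact_eq_bounded_closed)
qed

lemma compact_Zset: "compact (Zset A u)"
proof -
  have "Zset A u = unit_simplex \<inter> {z. A *v z = u}" by (auto simp: Zset_def)
  moreover have "closed {z. A *v z = u}"
    by (intro closed_Collect_eq continuous_intros linear_continuous_on) auto
  ultimately show ?thesis by (simp add: compact_Int_closed compact_unit_simplex)
qed

lemma Zset_nonempty: "u \<in> convA A \<Longrightarrow> Zset A u \<noteq> {}"
  by (auto simp: convA_def Zset_def)

lemma column_in_convA: "column j A \<in> convA A"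
  using axis_in_unit_simplex
  by (auto simp: convA_def matrix_vector_mult_basis intro!: exI[of _ "axis j 1"])

lemma convA_eq_convex_hull_cols: "convA A = convex hull (cols A)"
proof
  show "convA A \<subseteq> convex hull (cols A)"
  proof
    fix v assume "v \<in> convA A"
    then obtain x where x: "x \<in> unit_simplex" "v = A *v x" by (auto simp: convA_def)
    have "v = (\<Sum>i\<in>UNIV. (x$i) *\<^sub>R column i A)"
      using x by (simp add: matrix_mult_sum scalar_mult_eq_scaleR)
    also have "\<dots> \<in> convex hull (cols A)"
      using x(1) by (intro convex_sum) (auto simp: unit_simplex_def cols_def intro!: hull_inc)
    finally show "v \<in> convex hull (cols A)" .
  qed
  have "convA A = (\<lambda>x. A *v x) ` unit_simplex" by (auto simp: convA_def)
  then have "convex (convA A)"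
    by (simp add: convex_linear_image[OF matrix_vector_mul_linear convex_unit_simplex])
  moreover have "cols A \<subseteq> convA A" using column_in_convA by (auto simp: cols_def)
  ultimately show "convex hull (cols A) \<subseteq> convA A" by (simp add: hull_minimal)
qed

lemma finite_cols: "finite (cols A)"
proof -
  have "cols A = (\<lambda>j. column j A) ` UNIV" by (auto simp: cols_def)
  then show ?thesis by simp
qed

lemma polytope_convA: "polytope (convA A)"
  by (simp add: convA_eq_convex_hull_cols finite_cols polytope_convex_hull)

lemma compact_convA: "compact (convA A)"
  by (simp add: convA_eq_convex_hull_cols finite_cols compact_convex_hull finite_imp_compact)

lemma convex_convA: "convex (convA A)"
  by (simp add: convA_eq_convex_hull_cols)

section \<open>Faces and the facial distance\<close>

lemma convex_Diff_face:
  assumes T: "T face_of S" and S: "convex S"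
  shows "convex (S - T)"
  unfolding convex_contains_open_segment
proof (intro ballI subsetI)
  fix a b x assume a: "a \<in> S - T" and b: "b \<in> S - T" and x: "x \<in> open_segment a b"
  have "open_segment a b \<subseteq> S" using S a b unfolding convex_contains_open_segment by blast
  then have "x \<in> S" using x by blast
  moreover have "x \<notin> T" using face_ofD[OF T x] a b by blast
  ultimately show "x \<in> S - T" by blast
qed

lemma convex_hull_disjoint_face:
  assumes "T face_of S" "convex S" "K \<subseteq> S - T"
  shows "convex hull K \<inter> T = {}"
proof -
  have "convex hull K \<subseteq> S - T" using assms(3) convex_Diff_face[OF assms(1,2)] by (rule hull_minimal)
  then show ?thesis by blast
qed

lemma polytope_point_in_rel_interior_face:
  fixes P :: "'a::euclidean_space set"
  assumes P: "polytope P" and b: "b \<in> P"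
  obtains G where "G face_of P" "b \<in> rel_interior G"
proof -
  define G where "G = \<Inter>{F. F face_of P \<and> b \<in> F}"
  have G: "G face_of P" unfolding G_def
    using b face_of_refl[OF polytope_imp_convex[OF P]] by (intro face_of_Inter) auto
  have bG: "b \<in> G" by (auto simp: G_def)
  have "b \<in> rel_interior G"
  proof (rule ccontr)
    assume "b \<notin> rel_interior G"
    have pG: "polytope G" using face_of_polytope_polytope[OF P G] .
    then have "closed G" by (rule polytope_imp_closed)
    then have "b \<in> rel_frontier G" using \<open>b \<notin> rel_interior G\<close> bG by (simp add: rel_frontier_def)
    then obtain F where F: "F facet_of G" "b \<in> F"
      using rel_frontier_of_polyhedron[OF polytope_imp_polyhedron[OF pG]] by blast
    have "F face_of P" using face_of_trans[OF facet_of_imp_face_of[OF F(1)] G] .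
    then have "G \<subseteq> F" using F(2) by (auto simp: G_def)
    then have "F = G" using facet_of_imp_subset[OF F(1)] by blast
    then show False using F(1) by simp
  qed
  then show ?thesis using G that by blast
qed

lemma rel_interior_split_off_point:
  fixes G :: "'a::euclidean_space set"
  assumes G: "convex G" and b: "b \<in> rel_interior G" and c: "c \<in> G" and e: "0 < e"
  obtains \<delta> b' where "0 < \<delta>" "\<delta> \<le> e" "b' \<in> G" "b = \<delta> *\<^sub>R c + (1 - \<delta>) *\<^sub>R b'"
proof -
  obtain m where m: "1 < m" "\<And>k. 1 < k \<Longrightarrow> k \<le> m \<Longrightarrow> (1 - k) *\<^sub>R c + k *\<^sub>R b \<in> G"
    using convex_rel_interior_if[OF G b] c hull_inc[of c G] by blast
  define k where "k = min m (1 + e)"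
  have k: "1 < k" "k \<le> m" using m e by (auto simp: k_def)
  define b' where "b' = (1 - k) *\<^sub>R c + k *\<^sub>R b"
  show ?thesis
  proof
    show "0 < 1 - 1 / k" using k by simp
    have "1 - 1 / k = (k - 1) / k" using k by (simp add: field_simps)
    also have "\<dots> \<le> k - 1" using k mult_left_mono[of 1 k "k - 1"] by (simp add: divide_le_eq)
    also have "\<dots> \<le> e" by (simp add: k_def)
    finally show "1 - 1 / k \<le> e" .
    show "b' \<in> G" using m(2)[OF k] by (simp add: b'_def)
    have "(1 - 1 / k) *\<^sub>R c + (1 - (1 - 1 / k)) *\<^sub>R b' = (1 / k * k) *\<^sub>R b"
      using k by (simp add: b'_def algebra_simps)
    then show "b = (1 - 1 / k) *\<^sub>R c + (1 - (1 - 1 / k)) *\<^sub>R b'" using k by simp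
  qed
qed

lemma norm_set_dist_le:
  assumes "is_norm N" "u \<in> F" "w \<in> H"
  shows "norm_set_dist N F H \<le> N (u - w)"
  unfolding norm_set_dist_def
  by (rule cInf_lower) (use assms is_norm_nonneg in \<open>auto intro!: bdd_belowI[of _ 0]\<close>)

lemma norm_set_dist_pos:
  fixes N :: "real^'m \<Rightarrow> real"
  assumes N: "is_norm N" and F: "compact F" "F \<noteq> {}" and H: "compact H" "H \<noteq> {}"
    and disj: "F \<inter> H = {}"
  shows "0 < norm_set_dist N F H"
proof -
  have cont: "continuous_on (F \<times> H) (\<lambda>p. N (fst p - snd p))"
    by (rule continuous_on_compose2[OF is_norm_continuous_on[OF N, of UNIV]])
      (auto intro!: continuous_intros)
  have "compact (F \<times> H)" "F \<times> H \<noteq> {}" using F H by (auto simp: compact_Times)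
  then obtain p where
    p: "p \<in> F \<times> H" "\<And>q. q \<in> F \<times> H \<Longrightarrow> N (fst p - snd p) \<le> N (fst q - snd q)"
    using continuous_attains_inf[OF _ _ cont] by blast
  have "{N (u - w) | u w. u \<in> F \<and> w \<in> H} = (\<lambda>p. N (fst p - snd p)) ` (F \<times> H)" by force
  then have "norm_set_dist N F H = N (fst p - snd p)"
    unfolding norm_set_dist_def by (simp only:) (rule cInf_eq_minimum, use p in auto)
  moreover have "fst p - snd p \<noteq> 0" using p(1) disj by auto
  ultimately show ?thesis using is_norm_pos[OF N] by simp
qed

definition proper_faces :: "real^'n^'m \<Rightarrow> (real^'m) set set" where
  "proper_faces A = {F. F face_of convA A \<and> F \<noteq> {} \<and> F \<noteq> convA A}"

abbreviation opposite_hull :: "real^'n^'m \<Rightarrow> (real^'m) set \<Rightarrow> (real^'m) set" where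
  "opposite_hull A F \<equiv> convex hull {a \<in> cols A. a \<notin> F}"

lemma facial_distance_eq_Inf_proper_faces:
  "facial_distance N A = Inf ((\<lambda>F. norm_set_dist N F (opposite_hull A F)) ` proper_faces A)"
  unfolding facial_distance_def proper_faces_def by (rule arg_cong[where f=Inf]) blast

lemma finite_proper_faces: "finite (proper_faces A)"
  by (rule finite_subset[OF _ finite_polytope_faces[OF polytope_convA]])
    (auto simp: proper_faces_def)

lemma proper_face_disjoint_opposite_hull:
  assumes "F \<in> proper_faces A"
  shows "opposite_hull A F \<noteq> {}" "F \<inter> opposite_hull A F = {}"
proof -
  have F: "F face_of convA A" "F \<noteq> convA A" using assms by (auto simp: proper_faces_def)
  show "opposite_hull A F \<noteq> {}"
  proof
    assume "opposite_hull A F = {}"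
    then have "cols A \<subseteq> F" by auto
    then have "convex hull (cols A) \<subseteq> F" using face_of_imp_convex[OF F(1)] by (rule hull_minimal)
    then show False using F face_of_imp_subset[OF F(1)] by (simp add: convA_eq_convex_hull_cols)
  qed
  have "cols A \<subseteq> convA A" by (simp add: convA_eq_convex_hull_cols hull_subset)
  then have "{a \<in> cols A. a \<notin> F} \<subseteq> convA A - F" by blast
  then show "F \<inter> opposite_hull A F = {}"
    using convex_hull_disjoint_face[OF F(1) convex_convA] by (simp add: Int_commute)
qed

lemma facial_distance_le:
  "F \<in> proper_faces A \<Longrightarrow> facial_distance N A \<le> norm_set_dist N F (opposite_hull A F)"
  unfolding facial_distance_eq_Inf_proper_faces
  by (rule cInf_lower) (simp_all add: finite_proper_faces)

lemma facial_distance_pos: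
  assumes N: "is_norm N" and F: "F \<in> proper_faces A"
  shows "0 < facial_distance N A"
proof -
  let ?D = "(\<lambda>F. norm_set_dist N F (opposite_hull A F)) ` proper_faces A"
  have pos: "\<forall>d\<in>?D. 0 < d"
  proof
    fix d assume "d \<in> ?D"
    then obtain G where G: "G \<in> proper_faces A" "d = norm_set_dist N G (opposite_hull A G)" by blast
    have "compact G"
      using G(1) face_of_imp_compact[OF convex_convA compact_convA] by (auto simp: proper_faces_def)
    moreover have "compact (opposite_hull A G)"
      by (intro compact_convex_hull finite_imp_compact) (simp add: finite_cols)
    moreover have "G \<noteq> {}" using G(1) by (simp add: proper_faces_def)
    ultimately show "0 < d"
      unfolding G(2) using proper_face_disjoint_opposite_hull[OF G(1)] norm_set_dist_pos[OF N]
      by blast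
  qed
  have "Min ?D \<in> ?D" using F finite_proper_faces[of A] by (auto intro!: Min_in)
  with pos have "0 < Min ?D" by (rule bspec)
  moreover have "Inf ?D = Min ?D" using F finite_proper_faces[of A] by (auto intro!: cInf_eq_Min)
  ultimately show ?thesis unfolding facial_distance_eq_Inf_proper_faces by (simp only:)
qed

section \<open>Facial decomposition of a point of the simplex\<close>

definition feasible_split :: "real^'n^'m \<Rightarrow> real^'n \<Rightarrow> real^'m \<Rightarrow> real^'n \<Rightarrow> real^'n \<Rightarrow> bool" where
  "feasible_split A x u r y \<longleftrightarrow> (\<forall>i. 0 \<le> r $ i \<and> r $ i \<le> x $ i) \<and> y \<in> unit_simplex
     \<and> A *v r + (1 - (\<Sum>i\<in>UNIV. r $ i)) *\<^sub>R (A *v y) = u"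

lemma exists_maximal_feasible_split:
  assumes x: "x \<in> unit_simplex" and u: "u \<in> convA A"
  obtains r y where "feasible_split A x u r y"
    "\<And>r' y'. feasible_split A x u r' y' \<Longrightarrow> (\<Sum>i\<in>UNIV. r' $ i) \<le> (\<Sum>i\<in>UNIV. r $ i)"
proof -
  define K where "K = {p. feasible_split A x u (fst p) (snd p)}"
  have "closed K"
    unfolding K_def feasible_split_def unit_simplex_def mem_Collect_eq
    by (intro closed_Collect_conj closed_Collect_all closed_Collect_le closed_Collect_eq
        continuous_intros linear_continuous_on bounded_linear_compose[OF matrix_vector_mul_bounded_linear]
        bounded_linear_fst bounded_linear_snd)
  moreover have "K \<subseteq> cbox 0 x \<times> unit_simplex" by (auto simp: K_def feasible_split_def mem_box_cart)
  then have "bounded K" using bounded_Times[OF bounded_cbox compact_imp_bounded[OF compact_unit_simplex]]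
    by (rule bounded_subset[rotated])
  ultimately have "compact K" by (simp add: compact_eq_bounded_closed)
  obtain z where "z \<in> Zset A u" using Zset_nonempty[OF u] by blast
  then have "(0, z) \<in> K" using x by (auto simp: K_def feasible_split_def Zset_def unit_simplex_def)
  then have "K \<noteq> {}" by blast
  moreover have "continuous_on K (\<lambda>p. \<Sum>i\<in>UNIV. fst p $ i)" by (intro continuous_intros)
  ultimately obtain p where "p \<in> K" "\<And>q. q \<in> K \<Longrightarrow> (\<Sum>i\<in>UNIV. fst q $ i) \<le> (\<Sum>i\<in>UNIV. fst p $ i)"
    using continuous_attains_sup[OF \<open>compact K\<close>] by blast
  then show ?thesis using that[of "fst p" "snd p"] by (auto simp: K_def)
qed

text \<open>Otherwise \<^term>\<open>A *v y\<close> could hand a little weight over to that column, increasing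
  the mass kept in \<^term>\<open>r\<close>.\<close>
lemma maximal_split_column_notin_face:
  assumes split: "feasible_split A x u r y"
    and max: "\<And>r' y'. feasible_split A x u r' y' \<Longrightarrow> (\<Sum>i\<in>UNIV. r' $ i) \<le> (\<Sum>i\<in>UNIV. r $ i)"
    and t: "0 < t" "t = 1 - (\<Sum>i\<in>UNIV. r $ i)"
    and G: "G face_of convA A" "A *v y \<in> rel_interior G"
    and i: "r $ i < x $ i"
  shows "column i A \<notin> G"
proof
  assume "column i A \<in> G"
  obtain \<delta> b' where \<delta>: "0 < \<delta>" "\<delta> \<le> (x $ i - r $ i) / t" and "b' \<in> G"
    and b: "A *v y = \<delta> *\<^sub>R column i A + (1 - \<delta>) *\<^sub>R b'"
    using rel_interior_split_off_point[OF face_of_imp_convex[OF G(1)] G(2) \<open>column i A \<in> G\<close>] i t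
    by (metis diff_gt_0_iff_gt divide_pos_pos)
  then have "b' \<in> convA A" using face_of_imp_subset[OF G(1)] by blast
  then obtain y' where y': "y' \<in> unit_simplex" "A *v y' = b'" by (auto simp: convA_def)
  define r' where "r' = r + (t * \<delta>) *\<^sub>R axis i 1"
  have sum_r': "(\<Sum>j\<in>UNIV. r' $ j) = (\<Sum>j\<in>UNIV. r $ j) + t * \<delta>"
    by (simp add: r'_def sum.distrib sum_distrib_left[symmetric] axis_def)
  have "t * \<delta> \<le> x $ i - r $ i" using \<delta>(2) t(1) by (simp add: field_simps)
  then have "0 \<le> r' $ j \<and> r' $ j \<le> x $ j" for j
    using split \<delta>(1) t(1) by (auto simp: feasible_split_def r'_def axis_def)
  moreover have "A *v r' + (1 - (\<Sum>j\<in>UNIV. r' $ j)) *\<^sub>R (A *v y') = u"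
  proof -
    have "1 - (\<Sum>j\<in>UNIV. r' $ j) = t * (1 - \<delta>)" by (simp add: sum_r' t(2) algebra_simps)
    then have "A *v r' + (1 - (\<Sum>j\<in>UNIV. r' $ j)) *\<^sub>R (A *v y')
        = A *v r + (t * \<delta>) *\<^sub>R column i A + (t * (1 - \<delta>)) *\<^sub>R b'"
      by (simp add: r'_def y'(2) matrix_vector_right_distrib matrix_vector_mult_scaleR
          matrix_vector_mult_basis)
    also have "\<dots> = A *v r + t *\<^sub>R (A *v y)" by (simp add: b algebra_simps)
    finally show ?thesis using split by (simp add: feasible_split_def t(2))
  qed
  ultimately have "feasible_split A x u r' y'" using y'(1) by (simp add: feasible_split_def)
  then show False using max[of r' y'] sum_r' mult_pos_pos[OF t(1) \<delta>(1)] by simp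
qed

lemma simplex_facial_decomposition:
  fixes A :: "real^'n^'m"
  assumes x: "x \<in> unit_simplex" and u: "u \<in> convA A" and x_notin: "x \<notin> Zset A u"
  obtains z t G a b where "z \<in> Zset A u" "0 < t" "(\<Sum>i\<in>UNIV. \<bar>x $ i - z $ i\<bar>) \<le> 2 * t"
    "A *v x - u = t *\<^sub>R (a - b)" "G \<in> proper_faces A" "b \<in> G" "a \<in> opposite_hull A G"
proof -
  obtain r y where split: "feasible_split A x u r y"
    and max: "\<And>r' y'. feasible_split A x u r' y' \<Longrightarrow> (\<Sum>i\<in>UNIV. r' $ i) \<le> (\<Sum>i\<in>UNIV. r $ i)"
    using exists_maximal_feasible_split[OF x u] by blast
  define t where "t = 1 - (\<Sum>i\<in>UNIV. r $ i)"
  define p where "p = x - r"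
  have r: "\<And>i. 0 \<le> r $ i" and p: "\<And>i. 0 \<le> p $ i" and y: "y \<in> unit_simplex"
    and ueq: "A *v r + t *\<^sub>R (A *v y) = u"
    using split by (auto simp: feasible_split_def p_def t_def)
  have sum_p: "(\<Sum>i\<in>UNIV. p $ i) = t"
    using x by (simp add: p_def t_def sum_subtractf unit_simplex_def)
  have "t \<noteq> 0"
  proof
    assume "t = 0"
    then have "p = 0" using sum_p p sum_nonneg_eq_0_iff[of UNIV "\<lambda>i. p $ i"] by (simp add: vec_eq_iff)
    then have "A *v x = u" using ueq \<open>t = 0\<close> by (simp add: p_def)
    then show False using x x_notin by (simp add: Zset_def)
  qed
  then have t: "0 < t" using sum_p p by (metis order_le_less sum_nonneg)
  define b where "b = A *v y"
  have "b \<in> convA A" using y by (auto simp: b_def convA_def)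
  then obtain G where G: "G face_of convA A" "b \<in> rel_interior G"
    using polytope_point_in_rel_interior_face[OF polytope_convA] by blast
  define I where "I = {i. 0 < p $ i}"
  have not_in_G: "column i A \<notin> G" if "i \<in> I" for i
    using maximal_split_column_notin_face[OF split max t t_def G[unfolded b_def]] that
    by (simp add: I_def p_def)
  have "(\<Sum>i\<in>I. p $ i) = (\<Sum>i\<in>UNIV. p $ i)"
    by (rule sum.mono_neutral_left) (use p in \<open>auto simp: I_def order_le_less\<close>)
  then have sum_I: "(\<Sum>i\<in>I. p $ i) = t" using sum_p by simp
  then obtain i0 where "i0 \<in> I" using t by fastforce
  have "G \<in> proper_faces A"
    using G not_in_G[OF \<open>i0 \<in> I\<close>] column_in_convA rel_interior_subset
    by (fastforce simp: proper_faces_def)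
  define a where "a = (\<Sum>i\<in>I. (p $ i / t) *\<^sub>R column i A)"
  have "a \<in> opposite_hull A G"
    unfolding a_def
  proof (rule convex_sum)
    show "(\<Sum>i\<in>I. p $ i / t) = 1" using sum_I t by (simp add: sum_divide_distrib[symmetric])
  qed (use p t not_in_G in \<open>auto simp: cols_def intro!: hull_inc\<close>)
  have "A *v p = (\<Sum>i\<in>I. p $ i *\<^sub>R column i A)"
    unfolding matrix_mult_sum scalar_mult_eq_scaleR
    by (rule sum.mono_neutral_right) (use p in \<open>auto simp: I_def order_le_less\<close>)
  also have "\<dots> = t *\<^sub>R a" using t by (simp add: a_def scaleR_sum_right)
  finally have "A *v x - u = t *\<^sub>R (a - b)"
    using ueq by (simp add: p_def b_def matrix_vector_mult_diff_distrib algebra_simps)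
  define z where "z = r + t *\<^sub>R y"
  have "z \<in> Zset A u"
    using r y t ueq
    by (simp add: Zset_def unit_simplex_def z_def sum.distrib sum_distrib_left[symmetric] t_def
        matrix_vector_right_distrib matrix_vector_mult_scaleR)
  have "(\<Sum>i\<in>UNIV. \<bar>x $ i - z $ i\<bar>) \<le> (\<Sum>i\<in>UNIV. p $ i + t * y $ i)"
  proof (rule sum_mono)
    fix i
    have "0 \<le> t * y $ i" using y t by (simp add: unit_simplex_def)
    then show "\<bar>x $ i - z $ i\<bar> \<le> p $ i + t * y $ i" using p[of i] by (simp add: z_def p_def)
  qed
  also have "\<dots> = 2 * t" using y by (simp add: sum.distrib sum_p sum_distrib_left[symmetric] unit_simplex_def)
  finally show ?thesis
    using that \<open>z \<in> Zset A u\<close> t \<open>A *v x - u = t *\<^sub>R (a - b)\<close> \<open>G \<in> proper_faces A\<close> G(2)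
      rel_interior_subset \<open>a \<in> opposite_hull A G\<close>
    by blast
qed

section \<open>Bounds on the relative constants\<close>

lemma axis_notin_Zset_column:
  "column i A \<noteq> column j A \<Longrightarrow> axis j 1 \<notin> Zset A (column i A)"
  by (auto simp: Zset_def matrix_vector_mult_basis)

lemma proper_faces_nonempty:
  assumes "column i A \<noteq> column j A"
  shows "proper_faces A \<noteq> {}"
  using simplex_facial_decomposition[OF axis_in_unit_simplex column_in_convA
      axis_notin_Zset_column[OF assms]] by blast

lemma rel_quot_set_nonempty:
  assumes "column i A \<noteq> column j A"
  shows "rel_quot_set N f f' A \<noteq> {}"
  using axis_in_unit_simplex column_in_convA axis_notin_Zset_column[OF assms]
  by (auto simp: rel_quot_set_def intro!: exI[of _ "column i A"] exI[of _ "axis j 1"])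

lemma basis_norm_sq_le_max_basis_norm_sq: "(N (axis i 1))\<^sup>2 \<le> max_basis_norm_sq N"
  unfolding max_basis_norm_sq_def by (rule Max_ge) auto

lemma max_basis_norm_sq_pos:
  assumes "is_norm (N :: real^'n \<Rightarrow> real)"
  shows "0 < max_basis_norm_sq N"
proof -
  have "0 < N (axis i 1)" for i :: 'n using is_norm_pos[OF assms] by (simp add: axis_eq_0_iff)
  then show ?thesis using basis_norm_sq_le_max_basis_norm_sq[of N] by (meson less_le_trans zero_less_power)
qed

lemma is_norm_le_sum_abs:
  fixes N :: "real^'n \<Rightarrow> real"
  assumes N: "is_norm N"
  shows "N w \<le> (\<Sum>i\<in>UNIV. \<bar>w $ i\<bar>) * sqrt (max_basis_norm_sq N)"
proof -
  have "N w = N (\<Sum>i\<in>UNIV. (w $ i) *\<^sub>R axis i 1)"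
    using basis_expansion[of w] by (simp add: scalar_mult_eq_scaleR)
  also have "\<dots> \<le> (\<Sum>i\<in>UNIV. N ((w $ i) *\<^sub>R axis i 1))" by (rule is_norm_sum_le[OF N])
  also have "\<dots> = (\<Sum>i\<in>UNIV. \<bar>w $ i\<bar> * N (axis i 1))" by (simp add: is_norm_scaleR[OF N])
  also have "\<dots> \<le> (\<Sum>i\<in>UNIV. \<bar>w $ i\<bar> * sqrt (max_basis_norm_sq N))"
    using basis_norm_sq_le_max_basis_norm_sq is_norm_nonneg[OF N]
    by (intro sum_mono mult_left_mono) (auto intro: real_le_rsqrt)
  finally show ?thesis by (simp add: sum_distrib_right)
qed

lemma restricted_gain_bound:
  fixes Nn :: "real^'n \<Rightarrow> real" and Nm :: "real^'m \<Rightarrow> real"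
  assumes Nn: "is_norm Nn" and Nm: "is_norm Nm" and w: "w \<noteq> 0" "(\<Sum>i\<in>UNIV. w $ i) = 0"
  shows "(Nm (A *v w))\<^sup>2 \<le> restricted_gain Nn Nm A * (Nn w)\<^sup>2"
proof -
  define W where "W = {(Nm (A *v w))\<^sup>2 / (Nn w)\<^sup>2 | w. w \<noteq> 0 \<and> (\<Sum>i\<in>UNIV. w $ i) = 0}"
  obtain C where C: "0 \<le> C" "\<And>x. Nm x \<le> C * norm x" using is_norm_le_norm[OF Nm] by blast
  obtain c where c: "0 < c" "\<And>x. c * norm x \<le> Nn x" using is_norm_ge_norm[OF Nn] by blast
  obtain K where K: "0 < K" "\<And>x. norm (A *v x) \<le> norm x * K"
    using bounded_linear.pos_bounded[OF matrix_vector_mul_bounded_linear[of A]] by blast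
  have "Nm (A *v v) \<le> (C * K / c) * Nn v" for v
  proof -
    have "Nm (A *v v) \<le> C * (norm v * K)" using C K(2)[of v] by (meson mult_left_mono order_trans)
    also have "\<dots> \<le> (C * K) * (Nn v / c)"
      using c C(1) K(1) by (simp add: field_simps mult_left_mono)
    finally show ?thesis by simp
  qed
  then have "q \<le> (C * K / c)\<^sup>2" if "q \<in> W" for q
    using that is_norm_nonneg[OF Nm] is_norm_pos[OF Nn]
    by (auto simp: W_def divide_le_eq power_mult_distrib[symmetric] intro!: power_mono)
  then have "bdd_above W" by (rule bdd_aboveI)
  moreover have "(Nm (A *v w))\<^sup>2 / (Nn w)\<^sup>2 \<in> W" using w by (auto simp: W_def)
  ultimately have "(Nm (A *v w))\<^sup>2 / (Nn w)\<^sup>2 \<le> restricted_gain Nn Nm A"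
    unfolding restricted_gain_def W_def[symmetric] by (rule cSup_upper[rotated])
  then show ?thesis using is_norm_pos[OF Nn w(1)] by (simp add: divide_le_eq)
qed

lemma restricted_gain_pos:
  fixes Nn :: "real^'n \<Rightarrow> real" and Nm :: "real^'m \<Rightarrow> real"
  assumes Nn: "is_norm Nn" and Nm: "is_norm Nm" and ij: "column i A \<noteq> column j A"
  shows "0 < restricted_gain Nn Nm A"
proof -
  define w where "w = axis j (1::real) - axis i 1"
  have "w \<noteq> 0" using ij by (auto simp: w_def axis_eq_axis)
  moreover have "(\<Sum>k\<in>UNIV. w $ k) = 0" by (simp add: w_def sum_subtractf axis_def)
  moreover have "A *v w \<noteq> 0" using ij by (simp add: w_def matrix_vector_mult_diff_distrib matrix_vector_mult_basis)
  ultimately have "0 < restricted_gain Nn Nm A * (Nn w)\<^sup>2"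
    using restricted_gain_bound[OF Nn Nm] is_norm_pos[OF Nm] by (meson less_le_trans zero_less_power)
  then show ?thesis by (simp add: zero_less_mult_iff)
qed

lemma distZ_attained:
  fixes Nn :: "real^'n \<Rightarrow> real"
  assumes Nn: "is_norm Nn" and u: "u \<in> convA A"
  obtains z where "z \<in> Zset A u" "distZ Nn A x u = Nn (x - z)"
proof -
  obtain z where z: "z \<in> Zset A u" "\<And>z'. z' \<in> Zset A u \<Longrightarrow> Nn (x - z) \<le> Nn (x - z')"
    using is_norm_attains_min_dist[OF Nn compact_Zset Zset_nonempty[OF u]] by blast
  have "distZ Nn A x u = Nn (x - z)"
    unfolding distZ_def by (rule cInf_eq_minimum) (use z in auto)
  then show ?thesis using that z(1) by blast
qed

lemma distZ_le: "is_norm Nn \<Longrightarrow> z \<in> Zset A u \<Longrightarrow> distZ Nn A x u \<le> Nn (x - z)"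
  unfolding distZ_def
  by (rule cInf_lower) (use is_norm_nonneg in \<open>auto intro!: bdd_belowI[of _ 0]\<close>)

lemma distZ_pos:
  fixes Nn :: "real^'n \<Rightarrow> real"
  assumes Nn: "is_norm Nn" and u: "u \<in> convA A" and x: "x \<notin> Zset A u"
  shows "0 < distZ Nn A x u"
proof -
  obtain z where "z \<in> Zset A u" "distZ Nn A x u = Nn (x - z)" using distZ_attained[OF Nn u] .
  then show ?thesis using x is_norm_pos[OF Nn, of "x - z"] by auto
qed

lemma rel_quot_le_smoothness_bound:
  fixes Nn :: "real^'n \<Rightarrow> real" and Nm :: "real^'m \<Rightarrow> real"
  assumes Nn: "is_norm Nn" and Nm: "is_norm Nm" and L: "0 \<le> L"
    and smooth: "Lsmooth_on Nm L f f' (convA A)" and q: "q \<in> rel_quot_set Nn f f' A"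
  shows "q \<le> L * restricted_gain Nn Nm A"
proof -
  obtain u x where u: "u \<in> convA A" and x: "x \<in> unit_simplex" "x \<notin> Zset A u"
    and q: "q = 2 * (f (A *v x) - f u - f' u (A *v x - u)) / (distZ Nn A x u)\<^sup>2"
    using q unfolding rel_quot_set_def by blast
  obtain z where z: "z \<in> Zset A u" and dz: "distZ Nn A x u = Nn (x - z)"
    using distZ_attained[OF Nn u(1)] .
  have d: "0 < Nn (x - z)" using distZ_pos[OF Nn u x(2)] dz by simp
  have "A *v x \<in> convA A" using x by (auto simp: convA_def)
  then have "2 * (f (A *v x) - f u - f' u (A *v x - u)) \<le> L * (Nm (A *v x - u))\<^sup>2"
    using smooth u unfolding Lsmooth_on_def by fastforce
  moreover have "(Nm (A *v x - u))\<^sup>2 \<le> restricted_gain Nn Nm A * (Nn (x - z))\<^sup>2"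
  proof -
    have "A *v x - u = A *v (x - z)" using z by (simp add: Zset_def matrix_vector_mult_diff_distrib)
    moreover have "x - z \<noteq> 0" "(\<Sum>i\<in>UNIV. (x - z) $ i) = 0"
      using d is_norm_zero[OF Nn] x z by (auto simp: sum_subtractf Zset_def unit_simplex_def)
    ultimately show ?thesis using restricted_gain_bound[OF Nn Nm] by simp
  qed
  ultimately have "2 * (f (A *v x) - f u - f' u (A *v x - u)) \<le> L * restricted_gain Nn Nm A * (Nn (x - z))\<^sup>2"
    using mult_left_mono[OF _ L] by (fastforce simp: mult.assoc)
  then show ?thesis using d by (simp add: q dz divide_le_eq)
qed

lemma rel_quot_ge_facial_bound:
  fixes Nn :: "real^'n \<Rightarrow> real" and Nm :: "real^'m \<Rightarrow> real"
  assumes Nn: "is_norm Nn" and Nm: "is_norm Nm" and \<mu>: "0 \<le> \<mu>"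
    and convex: "strongly_convex_wrt Nm \<mu> f f' (convA A)" and q: "q \<in> rel_quot_set Nn f f' A"
  shows "\<mu> * (facial_distance Nm A)\<^sup>2 / (4 * max_basis_norm_sq Nn) \<le> q"
proof -
  define M where "M = max_basis_norm_sq Nn"
  define \<Phi> where "\<Phi> = facial_distance Nm A"
  obtain u x where u: "u \<in> convA A" and x: "x \<in> unit_simplex" "x \<notin> Zset A u"
    and q: "q = 2 * (f (A *v x) - f u - f' u (A *v x - u)) / (distZ Nn A x u)\<^sup>2"
    using q unfolding rel_quot_set_def by blast
  have d: "0 < distZ Nn A x u" by (rule distZ_pos[OF Nn u x(2)])
  obtain z t G a b where z: "z \<in> Zset A u" and t: "0 < t"
    and l1: "(\<Sum>i\<in>UNIV. \<bar>x $ i - z $ i\<bar>) \<le> 2 * t" and xu: "A *v x - u = t *\<^sub>R (a - b)"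
    and G: "G \<in> proper_faces A" "b \<in> G" "a \<in> opposite_hull A G"
    by (rule simplex_facial_decomposition[OF x(1) u x(2)])
  have M: "0 < M" using max_basis_norm_sq_pos[OF Nn] by (simp add: M_def)
  have "distZ Nn A x u \<le> Nn (x - z)" by (rule distZ_le[OF Nn z])
  also have "\<dots> \<le> (\<Sum>i\<in>UNIV. \<bar>x $ i - z $ i\<bar>) * sqrt M"
    using is_norm_le_sum_abs[OF Nn, of "x - z"] by (simp add: M_def)
  also have "\<dots> \<le> 2 * t * sqrt M" using l1 M by (intro mult_right_mono) auto
  finally have "(distZ Nn A x u)\<^sup>2 \<le> (2 * t * sqrt M)\<^sup>2" using d by (intro power_mono) auto
  also have "\<dots> = 4 * t\<^sup>2 * M" using M by (simp add: power_mult_distrib)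
  finally have d_le: "(distZ Nn A x u)\<^sup>2 \<le> 4 * t\<^sup>2 * M" .
  have "\<Phi> \<le> Nm (a - b)"
    using facial_distance_le[OF G(1), of Nm] norm_set_dist_le[OF Nm G(2,3)] is_norm_commute[OF Nm, of a b]
    by (simp add: \<Phi>_def)
  then have "t * \<Phi> \<le> Nm (A *v x - u)"
    using t by (simp add: xu is_norm_scaleR[OF Nm])
  moreover have "0 \<le> t * \<Phi>" using t facial_distance_pos[OF Nm G(1)] by (simp add: \<Phi>_def)
  ultimately have tPhi: "(t * \<Phi>)\<^sup>2 \<le> (Nm (A *v x - u))\<^sup>2" by (intro power_mono)
  have "A *v x \<in> convA A" using x by (auto simp: convA_def)
  then have "f u + f' u (A *v x - u) + \<mu> / 2 * (Nm (A *v x - u))\<^sup>2 \<le> f (A *v x)"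
    using convex u unfolding strongly_convex_wrt_def by blast
  then have sc: "\<mu> * (Nm (A *v x - u))\<^sup>2 \<le> 2 * (f (A *v x) - f u - f' u (A *v x - u))"
    by (simp add: field_simps)
  have "\<mu> * \<Phi>\<^sup>2 / (4 * M) * (distZ Nn A x u)\<^sup>2 \<le> \<mu> * \<Phi>\<^sup>2 / (4 * M) * (4 * t\<^sup>2 * M)"
    using d_le \<mu> M by (intro mult_left_mono) auto
  also have "\<dots> = \<mu> * (t * \<Phi>)\<^sup>2" using M by (simp add: field_simps power_mult_distrib)
  also have "\<dots> \<le> \<mu> * (Nm (A *v x - u))\<^sup>2" using tPhi \<mu> by (rule mult_left_mono)
  also have "\<dots> \<le> 2 * (f (A *v x) - f u - f' u (A *v x - u))" by (rule sc)
  finally show ?thesis using d by (simp add: q le_divide_eq M_def \<Phi>_def)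
qed

lemma ereal_SUP_div_INF_le:
  assumes "Q \<noteq> {}" and bounds: "\<And>q. q \<in> Q \<Longrightarrow> lo \<le> q \<and> q \<le> hi" and lo: "0 < lo"
  shows "(SUP q\<in>Q. ereal q) / (INF q\<in>Q. ereal q) \<le> ereal (hi / lo)"
proof -
  obtain q0 where q0: "q0 \<in> Q" using assms(1) by blast
  have sup_le: "(SUP q\<in>Q. ereal q) \<le> ereal hi" by (rule SUP_least) (use bounds in auto)
  have le_inf: "ereal lo \<le> (INF q\<in>Q. ereal q)" by (rule INF_greatest) (use bounds in auto)
  have "(INF q\<in>Q. ereal q) \<le> ereal q0" "ereal q0 \<le> (SUP q\<in>Q. ereal q)"
    by (rule INF_lower[OF q0], rule SUP_upper[OF q0])
  then have inf_le_sup: "(INF q\<in>Q. ereal q) \<le> (SUP q\<in>Q. ereal q)" by (rule order_trans)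
  obtain s where s: "(SUP q\<in>Q. ereal q) = ereal s"
    using sup_le le_inf inf_le_sup by (cases "SUP q\<in>Q. ereal q") auto
  obtain i where i: "(INF q\<in>Q. ereal q) = ereal i"
    using sup_le le_inf inf_le_sup by (cases "INF q\<in>Q. ereal q") auto
  have "s \<le> hi" "lo \<le> i" "i \<le> s" using sup_le le_inf inf_le_sup by (simp_all add: s i)
  then have "s / i \<le> hi / lo" using lo by (intro frac_le) auto
  then show ?thesis using \<open>lo \<le> i\<close> lo by (simp add: s i)
qed

theorem corollary3:
  fixes Nn :: "real^'n \<Rightarrow> real" and Nm :: "real^'m \<Rightarrow> real"
    and A :: "real^'n^'m" and f :: "real^'m \<Rightarrow> real"
    and f' :: "real^'m \<Rightarrow> real^'m \<Rightarrow> real" and D :: "(real^'m) set"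
    and Lf \<mu>f :: real
  assumes "is_norm Nn" and "is_norm Nm"
    and "\<exists>i j. column i A \<noteq> column j A"
    and "open D" and "convex D" and "convex_on D f"
    and "\<forall>u\<in>D. (f has_derivative f' u) (at u)"
    and "convA A \<subseteq> D"
    and "Lf > 0" and "\<mu>f \<ge> 0"
    and "Lsmooth_on Nm Lf f f' (convA A)"
    and "strongly_convex_wrt Nm \<mu>f f f' (convA A)"
  shows "L_rel Nn f f' A \<le> ereal (Lf * restricted_gain Nn Nm A)
    \<and> mu_rel Nn f f' A \<ge> ereal (\<mu>f * (facial_distance Nm A)\<^sup>2 / (4 * max_basis_norm_sq Nn))
    \<and> L_rel Nn f f' A / mu_rel Nn f f' A \<le>
           ereal Lf / ereal \<mu>f * ereal (4 * max_basis_norm_sq Nn / (facial_distance Nm A)\<^sup>2)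
             * ereal (restricted_gain Nn Nm A)"
proof -
  note Nn = assms(1) and Nm = assms(2)
  obtain i j where ij: "column i A \<noteq> column j A" using assms(3) by blast
  have \<Phi>: "0 < facial_distance Nm A"
    using proper_faces_nonempty[OF ij] facial_distance_pos[OF Nm] by blast
  have M: "0 < max_basis_norm_sq Nn" by (rule max_basis_norm_sq_pos[OF Nn])
  define hi where "hi = Lf * restricted_gain Nn Nm A"
  define lo where "lo = \<mu>f * (facial_distance Nm A)\<^sup>2 / (4 * max_basis_norm_sq Nn)"
  have bounds: "lo \<le> q \<and> q \<le> hi" if "q \<in> rel_quot_set Nn f f' A" for q
    using rel_quot_ge_facial_bound[OF Nn Nm assms(10,12) that]
      rel_quot_le_smoothness_bound[OF Nn Nm _ assms(11) that] assms(9)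
    by (simp add: lo_def hi_def)
  have "L_rel Nn f f' A \<le> ereal hi" "ereal lo \<le> mu_rel Nn f f' A"
    unfolding L_rel_def mu_rel_def using bounds by (auto intro!: SUP_least INF_greatest)
  moreover have "L_rel Nn f f' A / mu_rel Nn f f' A \<le>
      ereal Lf / ereal \<mu>f * ereal (4 * max_basis_norm_sq Nn / (facial_distance Nm A)\<^sup>2)
        * ereal (restricted_gain Nn Nm A)"
  proof (cases "\<mu>f = 0")
    case True
    \<comment> \<open>\<^term>\<open>ereal Lf / ereal 0\<close> is \<open>\<infinity>\<close>, so the right-hand side is infinite\<close>
    then show ?thesis
      using assms(9) restricted_gain_pos[OF Nn Nm ij] M \<Phi> by (simp add: divide_ereal_def)
  next
    case False
    then have "0 < lo" using assms(10) M \<Phi> by (simp add: lo_def)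
    then have "L_rel Nn f f' A / mu_rel Nn f f' A \<le> ereal (hi / lo)"
      unfolding L_rel_def mu_rel_def
      by (intro ereal_SUP_div_INF_le[OF rel_quot_set_nonempty[OF ij]] bounds)
    then show ?thesis using False by (simp add: hi_def lo_def field_simps)
  qed
  ultimately show ?thesis by (simp add: hi_def lo_def)
qed

end
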